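(* Let $\{\pi_\theta\}_{\theta\in\Theta}$, $\Theta\subseteq\mathbb R^d$ open, be a family of stationary policies with $\theta\mapsto\pi_\theta(a|s)$ differentiable for all $s,a$, and assume each $\sigma(P_{s,a},\cdot):\mathbb R^{\mathcal S}\to\mathbb R$ is differentiable. Then $\theta\mapsto V^{\pi_\theta}(s)$ is differentiable for every $s$ and $$\nabla_\theta V^{\pi_\theta}(s)=\mathbb E\Big[\sum_{t=0}^{\infty}\gamma^t\,Q^{\pi_\theta}(s_t,a_t)\,\nabla_\theta\log\pi_\theta(a_t|s_t)\,\Big|\,s_0=s\Big],$$ where the expectation is over trajectories with $a_t\sim\pi_\theta(\cdot|s_t)$ and $s_{t+1}\sim\hat P^{\pi_\theta}_{s_t,a_t}$.
   Context: $\mathcal S$ and $\mathcal A$ are finite sets; $\Delta(\mathcal X)$ denotes the probability simplex over a finite set $\mathcal X$. $P=\{P_{s,a}\}$ with $P_{s,a}\in\Delta(\mathcal S)$ is the nominal transition kernel, $r:\mathcal S\times\mathcal A\to[0,1]$, $\gamma\in[0,1)$. A stationary policy is a map $\pi:\mathcal S\to\Delta(\mathcal A)$. A function $\sigma:\mathbb R^{\mathcal S}\to\mathbb R$ is a convex risk measure if (i) $V'\le V$ pointwise implies $\sigma(V)\le\sigma(V')$; (ii) $\sigma(V+m)=\sigma(V)-m$ for every constant $m$; (iii) $\sigma$ is convex. For each $(s,a)$ a convex risk measure $\sigma(P_{s,a},\cdot)$ is given, with penalty $D(\hat\mu,P_{s,a}):=\sup_{V}\big(-\sigma(P_{s,a},V)-\mathbb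 E_{s'\sim\hat\mu}V(s')\big)$ for $\hat\mu\in\Delta(\mathcal S)$. For a policy $\pi$, $V^\pi$ is the unique solution of $V^\pi(s)=\sum_a\pi(a|s)(r(s,a)-\gamma\sigma(P_{s,a},V^\pi))$, $Q^\pi(s,a):=r(s,a)-\gamma\sigma(P_{s,a},V^\pi)$, and $\hat P^\pi_{s,a}\in\arg\min_{\hat\mu\in\Delta(\mathcal S)}\big(D(\hat\mu,P_{s,a})+\mathbb E_{s'\sim\hat\mu}V^\pi(s')\big)$. *)

theory Defs
  imports "HOL-Analysis.Analysis"
begin

definition prob_simplex :: "('s::finite \<Rightarrow> real) set" where
  "prob_simplex = {\<mu>. (\<forall>x. 0 \<le> \<mu> x) \<and> (\<Sum>x\<in>UNIV. \<mu> x) = 1}"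

text \<open>Stationary (stochastic) policy: pol s a = probability of action a in state s.\<close>
definition stoch_policy :: "('s::finite \<Rightarrow> 'a::finite \<Rightarrow> real) \<Rightarrow> bool" where
  "stoch_policy pol \<longleftrightarrow> (\<forall>s. pol s \<in> prob_simplex)"

definition convex_risk_measure :: "(real^'s::finite \<Rightarrow> real) \<Rightarrow> bool" where
  "convex_risk_measure \<rho> \<longleftrightarrow>
     (\<forall>V V'. (\<forall>i. V' $ i \<le> V $ i) \<longrightarrow> \<rho> V \<le> \<rho> V') \<and>
     (\<forall>V m. \<rho> (V + (\<chi> i. m)) = \<rho> V - m) \<and>
     convex_on UNIV \<rho>"

definition penalty :: "(real^'s::finite \<Rightarrow> real) \<Rightarrow> ('s \<Rightarrow> real) \<Rightarrow> ereal" where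
  "penalty \<rho> \<mu> = (SUP V\<in>UNIV. ereal (- \<rho> V - (\<Sum>s'\<in>UNIV. \<mu> s' * V $ s')))"

definition rvalue ::
  "('s::finite \<Rightarrow> 'a::finite \<Rightarrow> real^'s \<Rightarrow> real) \<Rightarrow> ('s \<Rightarrow> 'a \<Rightarrow> real) \<Rightarrow> real
     \<Rightarrow> ('s \<Rightarrow> 'a \<Rightarrow> real) \<Rightarrow> real^'s" where
  "rvalue \<sigma> r \<gamma> pol = (THE V. \<forall>s. V $ s = (\<Sum>a\<in>UNIV. pol s a * (r s a - \<gamma> * \<sigma> s a V)))"

definition rQ ::
  "('s::finite \<Rightarrow> 'a::finite \<Rightarrow> real^'s \<Rightarrow> real) \<Rightarrow> ('s \<Rightarrow> 'a \<Rightarrow> real) \<Rightarrow> real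
     \<Rightarrow> ('s \<Rightarrow> 'a \<Rightarrow> real) \<Rightarrow> 's \<Rightarrow> 'a \<Rightarrow> real" where
  "rQ \<sigma> r \<gamma> pol s a = r s a - \<gamma> * \<sigma> s a (rvalue \<sigma> r \<gamma> pol)"

definition is_worst_kernel ::
  "(real^'s::finite \<Rightarrow> real) \<Rightarrow> real^'s \<Rightarrow> ('s \<Rightarrow> real) \<Rightarrow> bool" where
  "is_worst_kernel \<rho> V \<mu> \<longleftrightarrow> \<mu> \<in> prob_simplex \<and>
     (\<forall>\<nu>\<in>prob_simplex. penalty \<rho> \<mu> + ereal (\<Sum>s'\<in>UNIV. \<mu> s' * V $ s')
                  \<le> penalty \<rho> \<nu> + ereal (\<Sum>s'\<in>UNIV. \<nu> s' * V $ s'))"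

text \<open>Marginal distribution of s_t for the chain s_0 = s0, a_t ~ pol(.|s_t),
  s_{t+1} ~ Ph s_t a_t.\<close>
fun state_dist ::
  "('s::finite \<Rightarrow> 'a::finite \<Rightarrow> real) \<Rightarrow> ('s \<Rightarrow> 'a \<Rightarrow> 's \<Rightarrow> real) \<Rightarrow> 's \<Rightarrow> nat \<Rightarrow> 's \<Rightarrow> real" where
  "state_dist pol Ph s0 0 = (\<lambda>s'. if s' = s0 then 1 else 0)"
| "state_dist pol Ph s0 (Suc t) =
     (\<lambda>s''. \<Sum>s'\<in>UNIV. \<Sum>a\<in>UNIV. state_dist pol Ph s0 t s' * pol s' a * Ph s' a s'')"

definition grad :: "('p::euclidean_space \<Rightarrow> real) \<Rightarrow> 'p \<Rightarrow> 'p" where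
  "grad f x = (SOME g. (f has_derivative (\<lambda>h. g \<bullet> h)) (at x))"

end

theory Submission
  imports Defs
begin

(*
  Differentiate the robust Bellman equation V\<^sub>\<eta> = T\<^sub>\<eta> V\<^sub>\<eta> at \<theta>. A convex risk measure is
  1-Lipschitz for the sup norm, so each T\<^sub>\<eta> is a \<gamma>-contraction and \<eta> \<mapsto> V\<^sub>\<eta> is Lipschitz at \<theta>.
  The worst-case kernel \<hat>P\<^sub>s\<^sub>a attains the dual representation of \<sigma>(P\<^sub>s\<^sub>a, .) at V\<^sub>\<theta>, so
  -\<hat>P\<^sub>s\<^sub>a is a subgradient of it there, hence its gradient. Subtracting the Bellman equations
  at \<eta> and \<theta> then gives
    (I - \<gamma> \<hat>P\<^sub>\<pi>) (V\<^sub>\<eta> - V\<^sub>\<theta>) = \<Sum>\<^sub>a (\<pi>\<^sub>\<eta> - \<pi>\<^sub>\<theta>) Q + o(|\<eta> - \<theta>|),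
  the remainder being a product of two terms that are Lipschitz at \<theta> and vanish there, plus
  the first-order error of \<sigma> along V. The Neumann series of (I - \<gamma> \<hat>P\<^sub>\<pi>)\<^sup>-\<^sup>1 is the
  discounted occupancy of the chain driven by \<pi> and \<hat>P, and \<nabla>\<pi> = \<pi> \<nabla>ln \<pi> turns the result
  into the stated expectation.
*)

section \<open>Differential calculus\<close>

lemma has_derivative_vec_lambda:
  fixes f :: "'v::real_normed_vector \<Rightarrow> real^'n"
  assumes "\<And>i. ((\<lambda>x. f x $ i) has_derivative (\<lambda>h. f' h $ i)) (at x within S)"
  shows "(f has_derivative f') (at x within S)"
proof (rule has_derivative_componentwise_within[THEN iffD2, rule_format])
  fix b :: "real^'n" assume "b \<in> Basis"
  then obtain i where "b = axis i 1" using axis_inverse by blast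
  then show "((\<lambda>x. f x \<bullet> b) has_derivative (\<lambda>h. f' h \<bullet> b)) (at x within S)"
    using assms[of i] by (simp add: inner_axis)
qed

lemma convex_on_has_derivative_above_tangent:
  fixes f :: "'v::real_normed_vector \<Rightarrow> real"
  assumes convex: "convex_on UNIV f" and deriv: "(f has_derivative D) (at x)"
  shows "f x + D (y - x) \<le> f y"
proof -
  let ?g = "\<lambda>t::real. f (x + t *\<^sub>R (y - x))"
  have "convex_on UNIV ?g"
  proof (rule convex_onI)
    fix t u v :: real assume "0 < t" "t < 1"
    have "x + ((1 - t) * u + t * v) *\<^sub>R (y - x)
        = (1 - t) *\<^sub>R (x + u *\<^sub>R (y - x)) + t *\<^sub>R (x + v *\<^sub>R (y - x))"
      by (simp add: algebra_simps)
    then show "?g ((1 - t) *\<^sub>R u + t *\<^sub>R v) \<le> (1 - t) * ?g u + t * ?g v"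
      using convex_onD[OF convex, of t "x + u *\<^sub>R (y - x)" "x + v *\<^sub>R (y - x)"] \<open>0 < t\<close> \<open>t < 1\<close>
      by simp
  qed simp
  moreover have "(?g has_real_derivative D (y - x)) (at 0)"
  proof -
    have "((\<lambda>t::real. x + t *\<^sub>R (y - x)) has_derivative (\<lambda>t. t *\<^sub>R (y - x))) (at 0)"
      by (auto intro!: derivative_eq_intros)
    from has_derivative_compose[OF this] deriv
    have "(?g has_derivative (\<lambda>t. D (t *\<^sub>R (y - x)))) (at 0)" by simp
    moreover have "(\<lambda>t. D (t *\<^sub>R (y - x))) = (*) (D (y - x))"
      using has_derivative_linear[OF deriv] by (simp add: linear_scale mult.commute fun_eq_iff)
    ultimately show ?thesis by (simp add: has_field_derivative_def)
  qed
  ultimately have "D (y - x) * (1 - 0) \<le> ?g 1 - ?g 0"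
    by (intro convex_on_imp_above_tangent) auto
  then show ?thesis by simp
qed

lemma has_derivative_eq_subgradient:
  fixes f :: "'v::real_normed_vector \<Rightarrow> real"
  assumes deriv: "(f has_derivative D) (at x)" and L: "bounded_linear L"
    and subgradient: "\<And>y. f x + L (y - x) \<le> f y"
  shows "D = L"
proof -
  have "((\<lambda>y. y - x) has_derivative (\<lambda>h. h)) (at x)"
    using has_derivative_diff[OF has_derivative_ident has_derivative_const] by simp
  from has_derivative_diff[OF deriv bounded_linear.has_derivative[OF L this]]
  have "((\<lambda>y. f y - L (y - x)) has_derivative (\<lambda>h. D h - L h)) (at x)" .
  moreover have "\<forall>y\<in>UNIV. f x - L (x - x) \<le> f y - L (y - x)"
    using subgradient linear_0[OF bounded_linear.linear[OF L]] by (simp add: algebra_simps)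
  ultimately have "(\<lambda>h. D h - L h) = (\<lambda>h. 0)"
    using differential_zero_maxmin[OF UNIV_I open_UNIV] by blast
  then show ?thesis by (simp add: fun_eq_iff)
qed

lemma has_derivative_imp_eventually_lipschitz:
  assumes "(f has_derivative D) (at x)"
  obtains C where "eventually (\<lambda>y. norm (f y - f x) \<le> C * norm (y - x)) (at x)"
proof -
  have lin: "bounded_linear D"
    and lim: "((\<lambda>y. norm (f y - f x - D (y - x)) / norm (y - x)) \<longlongrightarrow> 0) (at x)"
    using assms unfolding has_derivative_iff_norm by auto
  obtain K where K: "\<And>h. norm (D h) \<le> norm h * K"
    using bounded_linear.bounded[OF lin] by blast
  have "eventually (\<lambda>y. norm (f y - f x - D (y - x)) / norm (y - x) < 1) (at x)"
    using order_tendstoD(2)[OF lim] by simp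
  then have "eventually (\<lambda>y. norm (f y - f x) \<le> (1 + K) * norm (y - x)) (at x)"
    using eventually_neq_at_within[of x x UNIV]
  proof eventually_elim
    case (elim y)
    then have "norm (f y - f x - D (y - x)) \<le> norm (y - x)"
      by (simp add: divide_less_eq)
    moreover have "norm (f y - f x) \<le> norm (D (y - x)) + norm (f y - f x - D (y - x))"
      by (rule norm_triangle_sub)
    ultimately show ?case
      using K[of "y - x"] by (simp add: distrib_right mult.commute)
  qed
  then show ?thesis by (rule that)
qed

lemma has_derivative_zero_if_little_o:
  fixes f :: "'v::real_normed_vector \<Rightarrow> 'w::real_normed_vector"
  assumes "f x = 0" and "(e \<longlongrightarrow> 0) (at x)"
    and "eventually (\<lambda>y. norm (f y) \<le> e y * norm (y - x)) (at x)"
  shows "(f has_derivative (\<lambda>h. 0)) (at x)"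
  unfolding has_derivative_iff_norm
proof
  show "bounded_linear (\<lambda>h. 0::'w)" by (rule bounded_linear_zero)
  show "((\<lambda>y. norm (f y - f x - 0) / norm (y - x)) \<longlongrightarrow> 0) (at x)"
  proof (rule tendsto_0_le[OF assms(2), where K=1])
    show "\<forall>\<^sub>F y in at x. norm (norm (f y - f x - 0) / norm (y - x)) \<le> norm (e y) * 1"
      using assms(3) eventually_neq_at_within[of x x UNIV]
    proof eventually_elim
      case (elim y)
      then have "norm (f y) / norm (y - x) \<le> e y"
        by (simp add: divide_le_eq)
      then show ?case using assms(1) by simp
    qed
  qed
qed

lemma has_derivative_zero_mult:
  fixes f g :: "'v::real_normed_vector \<Rightarrow> real"
  assumes "f x = 0"
    and f: "eventually (\<lambda>y. \<bar>f y\<bar> \<le> C * norm (y - x)) (at x)"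
    and g: "eventually (\<lambda>y. \<bar>g y\<bar> \<le> K * norm (y - x)) (at x)"
  shows "((\<lambda>y. f y * g y) has_derivative (\<lambda>h. 0)) (at x)"
proof (rule has_derivative_zero_if_little_o)
  show "f x * g x = 0" using assms(1) by simp
  have "((\<lambda>y. norm (y - x)) \<longlongrightarrow> 0) (at x)"
    by (intro tendsto_norm_zero LIM_zero tendsto_ident_at)
  then show "((\<lambda>y. C * K * norm (y - x)) \<longlongrightarrow> 0) (at x)"
    by (rule tendsto_mult_right_zero)
  show "eventually (\<lambda>y. norm (f y * g y) \<le> C * K * norm (y - x) * norm (y - x)) (at x)"
    using f g
  proof eventually_elim
    case (elim y)
    then have "\<bar>f y\<bar> * \<bar>g y\<bar> \<le> (C * norm (y - x)) * (K * norm (y - x))"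
      by (intro mult_mono) (auto intro: order_trans[OF abs_ge_zero])
    then show ?case by (simp add: abs_mult mult_ac)
  qed
qed

lemma has_derivative_compose_remainder:
  fixes g :: "'w::real_normed_vector \<Rightarrow> real" and F :: "'v::real_normed_vector \<Rightarrow> 'w"
  assumes g: "(g has_derivative g') (at (F x))"
    and F: "eventually (\<lambda>y. norm (F y - F x) \<le> C * norm (y - x)) (at x)"
  shows "((\<lambda>y. g (F y) - g (F x) - g' (F y - F x)) has_derivative (\<lambda>h. 0)) (at x)"
proof (rule has_derivative_zero_if_little_o)
  have lin: "linear g'"
    using g by (rule has_derivative_linear)
  show "g (F x) - g (F x) - g' (F x - F x) = 0"
    using linear_0[OF lin] by simp
  define \<phi> where "\<phi> z = norm (g z - g (F x) - g' (z - F x)) / norm (z - F x)" for z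
  have "isCont \<phi> (F x)"
    using g unfolding isCont_def has_derivative_iff_norm \<phi>_def by simp
  moreover have "(F \<longlongrightarrow> F x) (at x)"
  proof -
    have "((\<lambda>y. norm (y - x)) \<longlongrightarrow> 0) (at x)"
      by (intro tendsto_norm_zero LIM_zero tendsto_ident_at)
    then have "((\<lambda>y. F y - F x) \<longlongrightarrow> 0) (at x)"
      by (rule tendsto_0_le[where K=C]) (use F in \<open>simp add: mult.commute\<close>)
    then show ?thesis by (simp add: LIM_zero_iff)
  qed
  ultimately have "((\<lambda>y. \<phi> (F y)) \<longlongrightarrow> \<phi> (F x)) (at x)"
    by (rule isCont_tendsto_compose)
  then show "((\<lambda>y. \<phi> (F y) * C) \<longlongrightarrow> 0) (at x)"
    using tendsto_mult_left_zero by (force simp: \<phi>_def)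
  show "eventually (\<lambda>y. norm (g (F y) - g (F x) - g' (F y - F x)) \<le> \<phi> (F y) * C * norm (y - x)) (at x)"
    using F
  proof eventually_elim
    case (elim y)
    have "norm (g (F y) - g (F x) - g' (F y - F x)) = \<phi> (F y) * norm (F y - F x)"
      using linear_0[OF lin] by (cases "F y = F x") (simp_all add: \<phi>_def)
    also have "\<dots> \<le> \<phi> (F y) * (C * norm (y - x))"
      using elim by (intro mult_left_mono) (simp_all add: \<phi>_def)
    finally show ?case by (simp add: mult.assoc)
  qed
qed

lemma has_derivative_grad:
  fixes f :: "'p::euclidean_space \<Rightarrow> real"
  assumes "(f has_derivative D) (at x)"
  shows "(f has_derivative (\<lambda>h. grad f x \<bullet> h)) (at x)"
proof -
  have "D = (\<lambda>h. adjoint D 1 \<bullet> h)"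
    using adjoint_works[OF has_derivative_linear[OF assms]] by (simp add: fun_eq_iff inner_commute)
  then have "(f has_derivative (\<lambda>h. adjoint D 1 \<bullet> h)) (at x)"
    using assms by simp
  then show ?thesis
    unfolding grad_def by (rule someI)
qed

text \<open>At a zero of \<open>f\<close> both sides vanish, since a nonnegative \<open>f\<close> is minimal there; the
  junk value of the gradient of \<open>ln \<circ> f\<close> at such a point does not matter.\<close>

lemma has_derivative_ln_grad:
  fixes f :: "'p::euclidean_space \<Rightarrow> real"
  assumes "open \<Theta>" "\<theta> \<in> \<Theta>" and nonneg: "\<And>\<eta>. \<eta> \<in> \<Theta> \<Longrightarrow> 0 \<le> f \<eta>"
    and deriv: "(f has_derivative D) (at \<theta>)"
  shows "(f has_derivative (\<lambda>h. f \<theta> * (grad (\<lambda>\<eta>. ln (f \<eta>)) \<theta> \<bullet> h))) (at \<theta>)"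
proof (cases "f \<theta> = 0")
  case True
  then have "D = (\<lambda>h. 0)"
    using differential_zero_maxmin[OF assms(2,1) deriv] nonneg by auto
  then show ?thesis
    using deriv True by simp
next
  case False
  then have pos: "0 < f \<theta>"
    using nonneg[OF assms(2)] by simp
  have ln: "((\<lambda>\<eta>. ln (f \<eta>)) has_derivative (\<lambda>h. inverse (f \<theta>) * D h)) (at \<theta>)"
    using has_derivative_compose[OF deriv DERIV_ln[OF pos, unfolded has_field_derivative_def]] by simp
  then have "(\<lambda>h. grad (\<lambda>\<eta>. ln (f \<eta>)) \<theta> \<bullet> h) = (\<lambda>h. inverse (f \<theta>) * D h)"
    using has_derivative_grad has_derivative_unique by blast
  then have "(\<lambda>h. f \<theta> * (grad (\<lambda>\<eta>. ln (f \<eta>)) \<theta> \<bullet> h)) = D"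
    using pos by (simp add: fun_eq_iff)
  then show ?thesis
    using deriv by simp
qed

section \<open>Convex risk measures\<close>

lemma linear_cart_expansion:
  assumes "linear D"
  shows "D (h::real^'n) = (\<Sum>i\<in>UNIV. h $ i * D (axis i 1))"
proof -
  have "D h = D (\<Sum>i\<in>UNIV. h $ i *\<^sub>R axis i 1)"
    using basis_expansion[of h] by (simp add: scalar_mult_eq_scaleR)
  also have "\<dots> = (\<Sum>i\<in>UNIV. h $ i * D (axis i 1))"
    using assms by (simp add: linear_sum linear_scale)
  finally show ?thesis .
qed

lemma convex_risk_measure_mono:
  "convex_risk_measure \<rho> \<Longrightarrow> (\<And>i. V' $ i \<le> V $ i) \<Longrightarrow> \<rho> V \<le> \<rho> V'"
  unfolding convex_risk_measure_def by blast

lemma convex_risk_measure_shift: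
  "convex_risk_measure \<rho> \<Longrightarrow> \<rho> (V + (\<chi> i. m)) = \<rho> V - m"
  unfolding convex_risk_measure_def by blast

lemma convex_risk_measure_convex:
  "convex_risk_measure \<rho> \<Longrightarrow> convex_on UNIV \<rho>"
  unfolding convex_risk_measure_def by blast

lemma convex_risk_measure_lipschitz:
  assumes "convex_risk_measure \<rho>"
  shows "\<bar>\<rho> V - \<rho> W\<bar> \<le> infnorm (V - W)"
proof -
  have "\<rho> W - \<rho> V \<le> infnorm (V - W)" for V W
  proof -
    let ?c = "infnorm (V - W)"
    have "\<rho> W \<le> \<rho> (V + (\<chi> i. - ?c))"
    proof (rule convex_risk_measure_mono[OF assms])
      fix i
      show "(V + (\<chi> i. - ?c)) $ i \<le> W $ i"
        using component_le_infnorm_cart[of "V - W" i] by (simp add: abs_le_iff)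
    qed
    also have "\<dots> = \<rho> V + ?c"
      using convex_risk_measure_shift[OF assms] by simp
    finally show ?thesis by simp
  qed
  from this[of V W] this[of W V] show ?thesis
    by (simp add: infnorm_sub abs_le_iff)
qed

lemma convex_risk_measure_has_derivative_simplex:
  assumes crm: "convex_risk_measure \<rho>" and deriv: "(\<rho> has_derivative D) (at V)"
  obtains \<nu> where "\<nu> \<in> prob_simplex" and "D = (\<lambda>h. - (\<Sum>s\<in>UNIV. \<nu> s * h $ s))"
proof -
  define \<nu> where "\<nu> s = - D (axis s 1)" for s
  have tangent: "\<rho> V + D (W - V) \<le> \<rho> W" for W
    by (rule convex_on_has_derivative_above_tangent[OF convex_risk_measure_convex[OF crm] deriv])
  have D: "D h = - (\<Sum>s\<in>UNIV. \<nu> s * h $ s)" for h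
    unfolding linear_cart_expansion[OF has_derivative_linear[OF deriv], of h] \<nu>_def
    by (simp add: sum_negf mult.commute)
  have "0 \<le> \<nu> s" for s
  proof -
    have "\<rho> V + D (axis s 1) \<le> \<rho> (V + axis s 1)"
      using tangent[of "V + axis s 1"] by simp
    also have "\<dots> \<le> \<rho> V"
      by (rule convex_risk_measure_mono[OF crm]) (simp add: axis_def)
    finally show ?thesis by (simp add: \<nu>_def)
  qed
  moreover have "(\<Sum>s\<in>UNIV. \<nu> s) = 1"
  proof -
    have "\<rho> V + D (\<chi> i. m) \<le> \<rho> V - m" for m
      using tangent[of "V + (\<chi> i. m)"] convex_risk_measure_shift[OF crm, of V m] by simp
    from this[of 1] this[of "-1"] show ?thesis
      by (simp add: D sum_negf)
  qed
  ultimately have "\<nu> \<in> prob_simplex"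
    by (simp add: prob_simplex_def)
  moreover have "D = (\<lambda>h. - (\<Sum>s\<in>UNIV. \<nu> s * h $ s))"
    using D by blast
  ultimately show ?thesis by (rule that)
qed

text \<open>The reverse inequality holds for every \<open>\<mu>\<close>, so the left-hand side says that \<open>\<mu>\<close> attains
  the dual representation of \<open>\<rho>\<close> at \<open>V\<close>; this happens exactly when \<open>-\<mu>\<close> is a subgradient.\<close>

lemma penalty_attained_iff_subgradient:
  "penalty \<rho> \<mu> + ereal (\<Sum>s\<in>UNIV. \<mu> s * V $ s) \<le> ereal (- \<rho> V) \<longleftrightarrow>
   (\<forall>W. \<rho> V - (\<Sum>s\<in>UNIV. \<mu> s * (W - V) $ s) \<le> \<rho> W)"
proof -
  have expect_diff: "(\<Sum>s\<in>UNIV. \<mu> s * (W - V) $ s)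
      = (\<Sum>s\<in>UNIV. \<mu> s * W $ s) - (\<Sum>s\<in>UNIV. \<mu> s * V $ s)" for W
    by (simp add: right_diff_distrib sum_subtractf)
  have "penalty \<rho> \<mu> + ereal (\<Sum>s\<in>UNIV. \<mu> s * V $ s) \<le> ereal (- \<rho> V) \<longleftrightarrow>
        penalty \<rho> \<mu> \<le> ereal (- \<rho> V - (\<Sum>s\<in>UNIV. \<mu> s * V $ s))"
    by (cases "penalty \<rho> \<mu>") auto
  also have "\<dots> \<longleftrightarrow> (\<forall>W. - \<rho> W - (\<Sum>s\<in>UNIV. \<mu> s * W $ s) \<le> - \<rho> V - (\<Sum>s\<in>UNIV. \<mu> s * V $ s))"
    unfolding penalty_def by (simp add: SUP_le_iff)
  also have "\<dots> \<longleftrightarrow> (\<forall>W. \<rho> V - (\<Sum>s\<in>UNIV. \<mu> s * (W - V) $ s) \<le> \<rho> W)"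
    unfolding expect_diff by (simp add: algebra_simps)
  finally show ?thesis .
qed

lemma is_worst_kernel_subgradient:
  assumes crm: "convex_risk_measure \<rho>" and diff: "\<rho> differentiable (at V)"
    and worst: "is_worst_kernel \<rho> V \<mu>"
  shows "\<rho> V - (\<Sum>s\<in>UNIV. \<mu> s * (W - V) $ s) \<le> \<rho> W"
proof -
  obtain D where deriv: "(\<rho> has_derivative D) (at V)"
    using diff by (auto simp: differentiable_def)
  \<comment> \<open>Minus the gradient attains the dual representation, hence so does the minimiser \<open>\<mu>\<close>.\<close>
  obtain \<nu> where \<nu>: "\<nu> \<in> prob_simplex" and D: "D = (\<lambda>h. - (\<Sum>s\<in>UNIV. \<nu> s * h $ s))"
    using convex_risk_measure_has_derivative_simplex[OF crm deriv] .
  have "\<rho> V + D (W - V) \<le> \<rho> W" for W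
    by (rule convex_on_has_derivative_above_tangent[OF convex_risk_measure_convex[OF crm] deriv])
  then have "penalty \<rho> \<nu> + ereal (\<Sum>s\<in>UNIV. \<nu> s * V $ s) \<le> ereal (- \<rho> V)"
    unfolding penalty_attained_iff_subgradient D by simp
  moreover have "penalty \<rho> \<mu> + ereal (\<Sum>s\<in>UNIV. \<mu> s * V $ s)
      \<le> penalty \<rho> \<nu> + ereal (\<Sum>s\<in>UNIV. \<nu> s * V $ s)"
    using worst \<nu> by (simp add: is_worst_kernel_def)
  ultimately have "penalty \<rho> \<mu> + ereal (\<Sum>s\<in>UNIV. \<mu> s * V $ s) \<le> ereal (- \<rho> V)"
    by (rule order_trans[rotated])
  then show ?thesis
    unfolding penalty_attained_iff_subgradient by blast
qed

lemma convex_risk_measure_has_derivative: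
  assumes "convex_risk_measure \<rho>" and "\<rho> differentiable (at V)"
    and "is_worst_kernel \<rho> V \<mu>"
  shows "(\<rho> has_derivative (\<lambda>h. - (\<Sum>s\<in>UNIV. \<mu> s * h $ s))) (at V)"
proof -
  obtain D where deriv: "(\<rho> has_derivative D) (at V)"
    using assms(2) by (auto simp: differentiable_def)
  have "bounded_linear (\<lambda>h. - (\<Sum>s\<in>UNIV. \<mu> s * h $ s))"
    by (intro bounded_linear_minus bounded_linear_sum
        bounded_linear_compose[OF bounded_linear_mult_right bounded_linear_vec_nth])
  then have "D = (\<lambda>h. - (\<Sum>s\<in>UNIV. \<mu> s * h $ s))"
    using has_derivative_eq_subgradient[OF deriv] is_worst_kernel_subgradient[OF assms]
    by (simp add: sum_negf)
  then show ?thesis using deriv by simp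
qed

section \<open>The robust Bellman operator\<close>

lemma infnorm_le_cart:
  fixes x :: "real^'n"
  assumes "\<And>i. \<bar>x $ i\<bar> \<le> c"
  shows "infnorm x \<le> c"
  unfolding infnorm_cart by (rule cSup_least) (use assms in auto)

lemma funpow_fixpoint: "f x = x \<Longrightarrow> (f ^^ k) x = x"
  by (induction k) auto

lemma funpow_contraction_unique_fixpoint:
  fixes f :: "'a::complete_space \<Rightarrow> 'a"
  assumes "0 \<le> c" "c < 1" and "\<And>x y. dist ((f ^^ k) x) ((f ^^ k) y) \<le> c * dist x y"
  shows "\<exists>!x. f x = x"
proof -
  obtain x where x: "(f ^^ k) x = x" and unique: "\<And>y. (f ^^ k) y = y \<Longrightarrow> y = x"
    using banach_fix_type[of c "f ^^ k"] assms by metis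
  have "(f ^^ k) (f x) = f x"
    using x by (metis funpow_swap1)
  then have "f x = x" by (rule unique)
  moreover have "y = x" if "f y = y" for y
    using unique funpow_fixpoint[of f y, OF that] by blast
  ultimately show ?thesis by blast
qed

definition bellman ::
  "('s::finite \<Rightarrow> 'a::finite \<Rightarrow> real^'s \<Rightarrow> real) \<Rightarrow> ('s \<Rightarrow> 'a \<Rightarrow> real) \<Rightarrow> real
     \<Rightarrow> ('s \<Rightarrow> 'a \<Rightarrow> real) \<Rightarrow> real^'s \<Rightarrow> real^'s" where
  "bellman \<sigma> r \<gamma> p V = (\<chi> s. \<Sum>a\<in>UNIV. p s a * (r s a - \<gamma> * \<sigma> s a V))"

lemma stoch_policy_nonneg: "stoch_policy p \<Longrightarrow> 0 \<le> p s a"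
  unfolding stoch_policy_def prob_simplex_def by blast

lemma stoch_policy_sum: "stoch_policy p \<Longrightarrow> (\<Sum>a\<in>UNIV. p s a) = 1"
  unfolding stoch_policy_def prob_simplex_def by blast

locale robust_mdp =
  fixes \<sigma> :: "'s::finite \<Rightarrow> 'a::finite \<Rightarrow> real^'s \<Rightarrow> real" and r :: "'s \<Rightarrow> 'a \<Rightarrow> real" and \<gamma> :: real
  assumes risk: "\<And>s a. convex_risk_measure (\<sigma> s a)" and gamma: "0 \<le> \<gamma>" "\<gamma> < 1"
begin

lemma bellman_contraction:
  assumes "stoch_policy p"
  shows "infnorm (bellman \<sigma> r \<gamma> p V - bellman \<sigma> r \<gamma> p W) \<le> \<gamma> * infnorm (V - W)"
proof (rule infnorm_le_cart)
  fix s
  have "\<bar>(bellman \<sigma> r \<gamma> p V - bellman \<sigma> r \<gamma> p W) $ s\<bar>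
      = \<bar>\<Sum>a\<in>UNIV. p s a * (\<gamma> * (\<sigma> s a W - \<sigma> s a V))\<bar>"
    by (simp add: bellman_def sum_subtractf[symmetric] algebra_simps)
  also have "\<dots> \<le> (\<Sum>a\<in>UNIV. p s a * (\<gamma> * infnorm (V - W)))"
  proof (rule order_trans[OF sum_abs sum_mono])
    fix a
    have "\<bar>\<sigma> s a W - \<sigma> s a V\<bar> \<le> infnorm (V - W)"
      using convex_risk_measure_lipschitz[OF risk, of s a W V] by (simp add: infnorm_sub)
    then show "\<bar>p s a * (\<gamma> * (\<sigma> s a W - \<sigma> s a V))\<bar> \<le> p s a * (\<gamma> * infnorm (V - W))"
      using stoch_policy_nonneg[OF assms, of s a] gamma
      by (simp add: abs_mult mult_left_mono)
  qed
  also have "\<dots> = \<gamma> * infnorm (V - W)"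
    by (simp add: sum_distrib_right[symmetric] stoch_policy_sum[OF assms])
  finally show "\<bar>(bellman \<sigma> r \<gamma> p V - bellman \<sigma> r \<gamma> p W) $ s\<bar> \<le> \<gamma> * infnorm (V - W)" .
qed

lemma bellman_unique_fixpoint:
  assumes p: "stoch_policy p"
  shows "\<exists>!V. bellman \<sigma> r \<gamma> p V = V"
proof -
  let ?T = "bellman \<sigma> r \<gamma> p"
  have iterate: "infnorm ((?T ^^ k) V - (?T ^^ k) W) \<le> \<gamma> ^ k * infnorm (V - W)" for k V W
  proof (induction k)
    case (Suc k)
    have "infnorm ((?T ^^ Suc k) V - (?T ^^ Suc k) W) \<le> \<gamma> * infnorm ((?T ^^ k) V - (?T ^^ k) W)"
      using bellman_contraction[OF p] by simp
    also have "\<dots> \<le> \<gamma> * (\<gamma> ^ k * infnorm (V - W))"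
      using Suc gamma by (simp add: mult_left_mono)
    finally show ?case by simp
  qed simp
  \<comment> \<open>\<open>?T\<close> contracts for the sup norm; a high enough iterate then also contracts for the
    Euclidean norm, to which Banach's theorem applies.\<close>
  let ?n = "sqrt (real CARD('s))"
  obtain k where k: "\<gamma> ^ k < 1 / ?n"
    using real_arch_pow_inv[of "1 / ?n" \<gamma>] gamma by auto
  show ?thesis
  proof (rule funpow_contraction_unique_fixpoint[of "?n * \<gamma> ^ k"])
    show "0 \<le> ?n * \<gamma> ^ k" "?n * \<gamma> ^ k < 1"
      using gamma k by (simp_all add: field_simps)
    fix V W :: "real^'s"
    have "dist ((?T ^^ k) V) ((?T ^^ k) W) \<le> ?n * infnorm ((?T ^^ k) V - (?T ^^ k) W)"
      using norm_le_infnorm[of "(?T ^^ k) V - (?T ^^ k) W"] by (simp add: dist_norm)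
    also have "\<dots> \<le> ?n * (\<gamma> ^ k * dist V W)"
    proof (rule mult_left_mono)
      have "\<gamma> ^ k * infnorm (V - W) \<le> \<gamma> ^ k * dist V W"
        using infnorm_le_norm[of "V - W"] gamma by (simp add: dist_norm mult_left_mono)
      then show "infnorm ((?T ^^ k) V - (?T ^^ k) W) \<le> \<gamma> ^ k * dist V W"
        using iterate[of k V W] by linarith
    qed simp
    finally show "dist ((?T ^^ k) V) ((?T ^^ k) W) \<le> ?n * \<gamma> ^ k * dist V W"
      by (simp add: mult.assoc)
  qed
qed

lemma bellman_rvalue:
  assumes "stoch_policy p"
  shows "bellman \<sigma> r \<gamma> p (rvalue \<sigma> r \<gamma> p) = rvalue \<sigma> r \<gamma> p"
proof -
  have "rvalue \<sigma> r \<gamma> p = (THE V. bellman \<sigma> r \<gamma> p V = V)"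
    by (simp add: rvalue_def bellman_def vec_eq_iff eq_commute)
  then show ?thesis
    using theI'[OF bellman_unique_fixpoint[OF assms]] by simp
qed

lemma rvalue_perturbation:
  assumes p: "stoch_policy p" and p': "stoch_policy p'"
  shows "infnorm (rvalue \<sigma> r \<gamma> p' - rvalue \<sigma> r \<gamma> p)
     \<le> infnorm (bellman \<sigma> r \<gamma> p' (rvalue \<sigma> r \<gamma> p) - rvalue \<sigma> r \<gamma> p) / (1 - \<gamma>)"
proof -
  let ?V = "rvalue \<sigma> r \<gamma> p" and ?V' = "rvalue \<sigma> r \<gamma> p'" and ?T' = "bellman \<sigma> r \<gamma> p'"
  have "?V' - ?V = (?T' ?V' - ?T' ?V) + (?T' ?V - ?V)"
    using bellman_rvalue[OF p'] by simp
  then have "infnorm (?V' - ?V) \<le> \<gamma> * infnorm (?V' - ?V) + infnorm (?T' ?V - ?V)"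
    using infnorm_triangle[of "?T' ?V' - ?T' ?V" "?T' ?V - ?V"] bellman_contraction[OF p', of ?V' ?V]
    by simp
  then show ?thesis
    using gamma by (simp add: field_simps)
qed

end

section \<open>Discounted state occupancy\<close>

definition occupancy ::
  "('s::finite \<Rightarrow> 'a::finite \<Rightarrow> real) \<Rightarrow> ('s \<Rightarrow> 'a \<Rightarrow> 's \<Rightarrow> real) \<Rightarrow> real \<Rightarrow> 's \<Rightarrow> 's \<Rightarrow> real" where
  "occupancy p P \<gamma> s0 s = (\<Sum>t. \<gamma> ^ t * state_dist p P s0 t s)"

locale stochastic_chain =
  fixes p :: "'s::finite \<Rightarrow> 'a::finite \<Rightarrow> real" and P :: "'s \<Rightarrow> 'a \<Rightarrow> 's \<Rightarrow> real"
  assumes policy: "stoch_policy p" and kernel: "\<And>s a. P s a \<in> prob_simplex"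
begin

lemma state_dist_nonneg: "0 \<le> state_dist p P s0 t s"
proof -
  have "0 \<le> P s a s'" for s a s'
    using kernel[of s a] by (simp add: prob_simplex_def)
  then show ?thesis
    by (induction t arbitrary: s) (auto intro!: sum_nonneg simp: stoch_policy_nonneg[OF policy])
qed

lemma state_dist_Suc_expectation:
  "(\<Sum>s'\<in>UNIV. state_dist p P s0 (Suc t) s' * x s')
   = (\<Sum>s\<in>UNIV. state_dist p P s0 t s * (\<Sum>a\<in>UNIV. p s a * (\<Sum>s'\<in>UNIV. P s a s' * x s')))"
proof -
  have "(\<Sum>s'\<in>UNIV. state_dist p P s0 (Suc t) s' * x s')
      = (\<Sum>s'\<in>UNIV. \<Sum>s\<in>UNIV. \<Sum>a\<in>UNIV. state_dist p P s0 t s * p s a * P s a s' * x s')"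
    by (simp add: sum_distrib_right)
  also have "\<dots> = (\<Sum>s\<in>UNIV. \<Sum>a\<in>UNIV. \<Sum>s'\<in>UNIV. state_dist p P s0 t s * p s a * P s a s' * x s')"
    by (subst sum.swap, rule sum.cong[OF refl], rule sum.swap)
  finally show ?thesis
    by (simp add: sum_distrib_left mult.assoc)
qed

lemma state_dist_sum: "(\<Sum>s\<in>UNIV. state_dist p P s0 t s) = 1"
proof (induction t)
  case (Suc t)
  have "\<And>s a. (\<Sum>s'\<in>UNIV. P s a s') = 1"
    using kernel by (simp add: prob_simplex_def)
  then show ?case
    using state_dist_Suc_expectation[of s0 t "\<lambda>_. 1"] Suc
    by (simp add: stoch_policy_sum[OF policy])
qed simp

lemma state_dist_le_1: "state_dist p P s0 t s \<le> 1"
  using member_le_sum[of s UNIV "state_dist p P s0 t"] state_dist_nonneg state_dist_sum by simp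

end

locale discounted_chain = stochastic_chain +
  fixes \<gamma> :: real
  assumes gamma: "0 \<le> \<gamma>" "\<gamma> < 1"
begin

lemma summable_discounted_state_dist: "summable (\<lambda>t. \<gamma> ^ t * state_dist p P s0 t s)"
proof (rule summable_comparison_test)
  show "\<exists>N. \<forall>t\<ge>N. norm (\<gamma> ^ t * state_dist p P s0 t s) \<le> \<gamma> ^ t"
    using gamma state_dist_nonneg state_dist_le_1 by (auto simp: abs_mult intro!: mult_left_le)
  show "summable (\<lambda>t. \<gamma> ^ t)"
    using gamma by (simp add: summable_geometric)
qed

lemma summable_discounted_expectation:
  "summable (\<lambda>t. \<gamma> ^ t * (\<Sum>s\<in>UNIV. state_dist p P s0 t s * x s))"
proof -
  have "summable (\<lambda>t. \<Sum>s\<in>UNIV. \<gamma> ^ t * state_dist p P s0 t s * x s)"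
    by (intro summable_sum summable_mult2 summable_discounted_state_dist)
  then show ?thesis
    by (simp add: sum_distrib_left mult.assoc)
qed

lemma occupancy_expectation:
  "(\<Sum>s\<in>UNIV. occupancy p P \<gamma> s0 s * x s) = (\<Sum>t. \<gamma> ^ t * (\<Sum>s\<in>UNIV. state_dist p P s0 t s * x s))"
proof -
  have "(\<Sum>s\<in>UNIV. occupancy p P \<gamma> s0 s * x s) = (\<Sum>s\<in>UNIV. \<Sum>t. \<gamma> ^ t * state_dist p P s0 t s * x s)"
    unfolding occupancy_def by (simp add: suminf_mult2[OF summable_discounted_state_dist])
  also have "\<dots> = (\<Sum>t. \<Sum>s\<in>UNIV. \<gamma> ^ t * state_dist p P s0 t s * x s)"
    by (rule suminf_sum[symmetric]) (intro summable_mult2 summable_discounted_state_dist)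
  finally show ?thesis
    by (simp add: sum_distrib_left mult.assoc)
qed

text \<open>The occupancy matrix inverts \<open>I - \<gamma> P\<^sub>p\<close> (Neumann series).\<close>

lemma occupancy_resolvent:
  "x s0 = (\<Sum>s\<in>UNIV. occupancy p P \<gamma> s0 s * (x s - \<gamma> * (\<Sum>a\<in>UNIV. p s a * (\<Sum>s'\<in>UNIV. P s a s' * x s'))))"
proof -
  define A where "A t = \<gamma> ^ t * (\<Sum>s\<in>UNIV. state_dist p P s0 t s * x s)" for t
  have A: "summable A"
    unfolding A_def by (rule summable_discounted_expectation)
  have "(\<Sum>s\<in>UNIV. occupancy p P \<gamma> s0 s * (\<Sum>a\<in>UNIV. p s a * (\<Sum>s'\<in>UNIV. P s a s' * x s')))
      = (\<Sum>t. \<gamma> ^ t * (\<Sum>s\<in>UNIV. state_dist p P s0 t s * (\<Sum>a\<in>UNIV. p s a * (\<Sum>s'\<in>UNIV. P s a s' * x s'))))"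
    by (rule occupancy_expectation)
  also have "\<gamma> * \<dots> = (\<Sum>t. \<gamma> * (\<gamma> ^ t * (\<Sum>s\<in>UNIV. state_dist p P s0 t s * (\<Sum>a\<in>UNIV. p s a * (\<Sum>s'\<in>UNIV. P s a s' * x s')))))"
    by (rule suminf_mult[OF summable_discounted_expectation, symmetric])
  also have "\<dots> = (\<Sum>t. A (Suc t))"
    unfolding A_def state_dist_Suc_expectation by (simp add: mult.assoc)
  also have "\<dots> = suminf A - A 0"
    by (rule suminf_split_head[OF A])
  finally show ?thesis
    by (simp add: right_diff_distrib sum_subtractf sum_distrib_left mult.left_commute
        occupancy_expectation A_def[abs_def] if_distrib[of "\<lambda>z. z * _"] sum.delta)
qed

lemma summable_discounted_state_action_series:
  fixes g :: "_ \<Rightarrow> _ \<Rightarrow> 'e::real_normed_vector"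
  shows "summable (\<lambda>t. \<gamma> ^ t *\<^sub>R (\<Sum>s\<in>UNIV. \<Sum>a\<in>UNIV. (state_dist p P s0 t s * p s a * c s a) *\<^sub>R g s a))"
proof -
  have "summable (\<lambda>t. \<Sum>s\<in>UNIV. \<Sum>a\<in>UNIV. (\<gamma> ^ t * state_dist p P s0 t s) *\<^sub>R ((p s a * c s a) *\<^sub>R g s a))"
    by (intro summable_sum summable_scaleR_left summable_discounted_state_dist)
  then show ?thesis
    by (simp add: scaleR_sum_right mult_ac)
qed

lemma discounted_state_action_series_inner:
  fixes h :: "'e::real_inner"
  shows "(\<Sum>t. \<gamma> ^ t *\<^sub>R (\<Sum>s\<in>UNIV. \<Sum>a\<in>UNIV. (state_dist p P s0 t s * p s a * c s a) *\<^sub>R g s a)) \<bullet> h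
   = (\<Sum>s\<in>UNIV. occupancy p P \<gamma> s0 s * (\<Sum>a\<in>UNIV. p s a * (g s a \<bullet> h) * c s a))"
proof -
  have "(\<Sum>t. \<gamma> ^ t *\<^sub>R (\<Sum>s\<in>UNIV. \<Sum>a\<in>UNIV. (state_dist p P s0 t s * p s a * c s a) *\<^sub>R g s a)) \<bullet> h
      = (\<Sum>t. (\<gamma> ^ t *\<^sub>R (\<Sum>s\<in>UNIV. \<Sum>a\<in>UNIV. (state_dist p P s0 t s * p s a * c s a) *\<^sub>R g s a)) \<bullet> h)"
    by (rule bounded_linear.suminf[OF bounded_linear_inner_left summable_discounted_state_action_series])
  also have "\<dots> = (\<Sum>t. \<gamma> ^ t * (\<Sum>s\<in>UNIV. state_dist p P s0 t s * (\<Sum>a\<in>UNIV. p s a * (g s a \<bullet> h) * c s a)))"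
    by (simp add: inner_sum_left sum_distrib_left mult_ac)
  also have "\<dots> = (\<Sum>s\<in>UNIV. occupancy p P \<gamma> s0 s * (\<Sum>a\<in>UNIV. p s a * (g s a \<bullet> h) * c s a))"
    by (rule occupancy_expectation[symmetric])
  finally show ?thesis .
qed

end

section \<open>The robust policy gradient\<close>

text \<open>\<open>P\<close> plays the role of the worst-case kernel \<open>\<hat>P\<^sup>\<pi>\<^sup>\<theta>\<close>, which enters only through
  the gradient of \<open>\<sigma>\<close> at \<open>V\<^sup>\<pi>\<^sup>\<theta>\<close> (see \<open>convex_risk_measure_has_derivative\<close>).\<close>

locale differentiable_robust_policy = robust_mdp \<sigma> r \<gamma>
  for \<sigma> :: "'s::finite \<Rightarrow> 'a::finite \<Rightarrow> real^'s \<Rightarrow> real" and r :: "'s \<Rightarrow> 'a \<Rightarrow> real" and \<gamma> :: real +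
  fixes \<Theta> :: "'v::real_normed_vector set" and pol :: "'v \<Rightarrow> 's \<Rightarrow> 'a \<Rightarrow> real" and \<theta> :: 'v
    and dpol :: "'s \<Rightarrow> 'a \<Rightarrow> 'v \<Rightarrow> real" and P :: "'s \<Rightarrow> 'a \<Rightarrow> 's \<Rightarrow> real"
  assumes open_Theta: "open \<Theta>" and theta: "\<theta> \<in> \<Theta>"
    and policy: "\<And>\<eta>. \<eta> \<in> \<Theta> \<Longrightarrow> stoch_policy (pol \<eta>)"
    and policy_deriv: "\<And>s a. ((\<lambda>\<eta>. pol \<eta> s a) has_derivative dpol s a) (at \<theta>)"
    and kernel: "\<And>s a. P s a \<in> prob_simplex"
    and risk_deriv: "\<And>s a. (\<sigma> s a has_derivative (\<lambda>h. - (\<Sum>s'\<in>UNIV. P s a s' * h $ s')))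
                               (at (rvalue \<sigma> r \<gamma> (pol \<theta>)))"
begin

abbreviation V :: "'v \<Rightarrow> real^'s" where
  "V \<eta> \<equiv> rvalue \<sigma> r \<gamma> (pol \<eta>)"

abbreviation Q :: "'s \<Rightarrow> 'a \<Rightarrow> real" where
  "Q \<equiv> rQ \<sigma> r \<gamma> (pol \<theta>)"

lemma eventually_in_Theta: "eventually (\<lambda>\<eta>. \<eta> \<in> \<Theta>) (at \<theta>)"
  using open_Theta theta eventually_at_topological by blast

lemma rvalue_eventually_lipschitz:
  obtains C where "eventually (\<lambda>\<eta>. norm (V \<eta> - V \<theta>) \<le> C * norm (\<eta> - \<theta>)) (at \<theta>)"
proof -
  \<comment> \<open>By \<open>rvalue_perturbation\<close> it suffices that \<open>\<eta> \<mapsto> T\<^sub>\<eta> V\<^sub>\<theta>\<close> is Lipschitz at \<open>\<theta>\<close>.\<close>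
  let ?T = "\<lambda>\<eta>. bellman \<sigma> r \<gamma> (pol \<eta>) (V \<theta>)"
  have "(?T has_derivative (\<lambda>h. \<chi> s. \<Sum>a\<in>UNIV. dpol s a h * (r s a - \<gamma> * \<sigma> s a (V \<theta>)))) (at \<theta>)"
    unfolding bellman_def
    by (intro has_derivative_vec_lambda) (simp add: has_derivative_sum has_derivative_mult_left policy_deriv)
  then obtain C where C: "eventually (\<lambda>\<eta>. norm (?T \<eta> - ?T \<theta>) \<le> C * norm (\<eta> - \<theta>)) (at \<theta>)"
    by (rule has_derivative_imp_eventually_lipschitz)
  let ?n = "sqrt (real CARD('s))"
  have "eventually (\<lambda>\<eta>. norm (V \<eta> - V \<theta>) \<le> ?n / (1 - \<gamma>) * C * norm (\<eta> - \<theta>)) (at \<theta>)"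
    using C eventually_in_Theta
  proof eventually_elim
    case (elim \<eta>)
    have "norm (V \<eta> - V \<theta>) \<le> ?n * infnorm (V \<eta> - V \<theta>)"
      using norm_le_infnorm[of "V \<eta> - V \<theta>"] by simp
    also have "\<dots> \<le> ?n * (infnorm (?T \<eta> - V \<theta>) / (1 - \<gamma>))"
      using rvalue_perturbation[OF policy[OF theta] policy[OF elim(2)]]
      by (intro mult_left_mono) simp_all
    also have "\<dots> \<le> ?n * (norm (?T \<eta> - ?T \<theta>) / (1 - \<gamma>))"
      using infnorm_le_norm gamma bellman_rvalue[OF policy[OF theta]]
      by (intro mult_left_mono divide_right_mono) simp_all
    also have "\<dots> \<le> ?n * (C * norm (\<eta> - \<theta>) / (1 - \<gamma>))"
      using elim(1) gamma by (intro mult_left_mono divide_right_mono) simp_all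
    finally show ?case by (simp add: field_simps)
  qed
  then show ?thesis by (rule that)
qed

lemma rvalue_difference_expansion:
  assumes "\<eta> \<in> \<Theta>"
  shows "(V \<eta> - V \<theta>) $ s - \<gamma> * (\<Sum>a\<in>UNIV. pol \<theta> s a * (\<Sum>s'\<in>UNIV. P s a s' * (V \<eta> - V \<theta>) $ s'))
    = (\<Sum>a\<in>UNIV. (pol \<eta> s a - pol \<theta> s a) * Q s a)
      - \<gamma> * (\<Sum>a\<in>UNIV. (pol \<eta> s a - pol \<theta> s a) * (\<sigma> s a (V \<eta>) - \<sigma> s a (V \<theta>))
               + pol \<theta> s a * (\<sigma> s a (V \<eta>) - \<sigma> s a (V \<theta>) + (\<Sum>s'\<in>UNIV. P s a s' * (V \<eta> - V \<theta>) $ s')))"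
proof -
  have bellman_eq: "V \<xi> $ s = (\<Sum>a\<in>UNIV. pol \<xi> s a * (r s a - \<gamma> * \<sigma> s a (V \<xi>)))" if "\<xi> \<in> \<Theta>" for \<xi>
    using bellman_rvalue[OF policy[OF that]] by (simp add: bellman_def vec_eq_iff)
  let ?S = "\<lambda>a. \<Sum>s'\<in>UNIV. P s a s' * (V \<eta> - V \<theta>) $ s'"
  have "(V \<eta> - V \<theta>) $ s - \<gamma> * (\<Sum>a\<in>UNIV. pol \<theta> s a * ?S a)
      = (\<Sum>a\<in>UNIV. pol \<eta> s a * (r s a - \<gamma> * \<sigma> s a (V \<eta>))
                     - pol \<theta> s a * (r s a - \<gamma> * \<sigma> s a (V \<theta>)) - \<gamma> * (pol \<theta> s a * ?S a))"
    using bellman_eq[OF assms] bellman_eq[OF theta] by (simp add: sum_subtractf sum_distrib_left)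
  also have "\<dots> = (\<Sum>a\<in>UNIV. (pol \<eta> s a - pol \<theta> s a) * Q s a
      - \<gamma> * ((pol \<eta> s a - pol \<theta> s a) * (\<sigma> s a (V \<eta>) - \<sigma> s a (V \<theta>))
               + pol \<theta> s a * (\<sigma> s a (V \<eta>) - \<sigma> s a (V \<theta>) + ?S a)))"
    by (rule sum.cong) (simp_all add: rQ_def algebra_simps)
  finally show ?thesis
    by (simp add: sum_subtractf sum_distrib_left)
qed

lemma second_order_terms_has_derivative:
  "((\<lambda>\<eta>. \<Sum>a\<in>UNIV. (pol \<eta> s a - pol \<theta> s a) * (\<sigma> s a (V \<eta>) - \<sigma> s a (V \<theta>))
          + pol \<theta> s a * (\<sigma> s a (V \<eta>) - \<sigma> s a (V \<theta>) + (\<Sum>s'\<in>UNIV. P s a s' * (V \<eta> - V \<theta>) $ s')))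
    has_derivative (\<lambda>h. 0)) (at \<theta>)"
proof -
  obtain C where C: "eventually (\<lambda>\<eta>. norm (V \<eta> - V \<theta>) \<le> C * norm (\<eta> - \<theta>)) (at \<theta>)"
    by (rule rvalue_eventually_lipschitz)
  have cross_term: "((\<lambda>\<eta>. (pol \<eta> s a - pol \<theta> s a) * (\<sigma> s a (V \<eta>) - \<sigma> s a (V \<theta>))) has_derivative (\<lambda>h. 0)) (at \<theta>)"
    for a
  proof -
    obtain K where K: "eventually (\<lambda>\<eta>. norm (pol \<eta> s a - pol \<theta> s a) \<le> K * norm (\<eta> - \<theta>)) (at \<theta>)"
      using has_derivative_imp_eventually_lipschitz[OF policy_deriv] .
    have "eventually (\<lambda>\<eta>. \<bar>\<sigma> s a (V \<eta>) - \<sigma> s a (V \<theta>)\<bar> \<le> C * norm (\<eta> - \<theta>)) (at \<theta>)"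
      using C by eventually_elim
        (metis convex_risk_measure_lipschitz[OF risk] infnorm_le_norm order_trans)
    with K show ?thesis
      by (intro has_derivative_zero_mult) simp_all
  qed
  have risk_remainder: "((\<lambda>\<eta>. \<sigma> s a (V \<eta>) - \<sigma> s a (V \<theta>) + (\<Sum>s'\<in>UNIV. P s a s' * (V \<eta> - V \<theta>) $ s'))
      has_derivative (\<lambda>h. 0)) (at \<theta>)" for a
    using has_derivative_compose_remainder[OF risk_deriv C] by (simp add: sum_negf)
  have "((\<lambda>\<eta>. \<Sum>a\<in>UNIV. (pol \<eta> s a - pol \<theta> s a) * (\<sigma> s a (V \<eta>) - \<sigma> s a (V \<theta>))
          + pol \<theta> s a * (\<sigma> s a (V \<eta>) - \<sigma> s a (V \<theta>) + (\<Sum>s'\<in>UNIV. P s a s' * (V \<eta> - V \<theta>) $ s')))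
    has_derivative (\<lambda>h. \<Sum>a\<in>UNIV. 0 + pol \<theta> s a * 0)) (at \<theta>)"
    by (intro has_derivative_sum has_derivative_add has_derivative_mult_right cross_term risk_remainder)
  then show ?thesis by simp
qed

theorem rvalue_has_derivative:
  "((\<lambda>\<eta>. V \<eta> $ s0) has_derivative
     (\<lambda>h. \<Sum>s\<in>UNIV. occupancy (pol \<theta>) P \<gamma> s0 s * (\<Sum>a\<in>UNIV. dpol s a h * Q s a))) (at \<theta>)"
proof -
  interpret chain: discounted_chain "pol \<theta>" P \<gamma>
    using policy[OF theta] kernel gamma by unfold_locales
  define E where "E s \<eta> = (V \<eta> - V \<theta>) $ s
    - \<gamma> * (\<Sum>a\<in>UNIV. pol \<theta> s a * (\<Sum>s'\<in>UNIV. P s a s' * (V \<eta> - V \<theta>) $ s'))" for s \<eta>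
  have E: "(E s has_derivative (\<lambda>h. \<Sum>a\<in>UNIV. dpol s a h * Q s a)) (at \<theta>)" for s
  proof -
    have "((\<lambda>\<eta>. \<Sum>a\<in>UNIV. (pol \<eta> s a - pol \<theta> s a) * Q s a) has_derivative
        (\<lambda>h. \<Sum>a\<in>UNIV. (dpol s a h - 0) * Q s a)) (at \<theta>)"
      by (intro has_derivative_sum has_derivative_mult_left has_derivative_diff policy_deriv
          has_derivative_const)
    from has_derivative_diff[OF this
        bounded_linear.has_derivative[OF bounded_linear_mult_right[of \<gamma>] second_order_terms_has_derivative[of s]]]
    show ?thesis
      by (rule has_derivative_transform_within_open[OF has_derivative_eq_rhs open_Theta theta])
        (simp_all only: E_def rvalue_difference_expansion, simp)
  qed
  have resolvent: "V \<theta> $ s0 + (\<Sum>s\<in>UNIV. occupancy (pol \<theta>) P \<gamma> s0 s * E s \<eta>) = V \<eta> $ s0" for \<eta>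
    using chain.occupancy_resolvent[of "\<lambda>s. (V \<eta> - V \<theta>) $ s" s0]
    by (simp add: E_def)
  have "((\<lambda>\<eta>. V \<theta> $ s0 + (\<Sum>s\<in>UNIV. occupancy (pol \<theta>) P \<gamma> s0 s * E s \<eta>)) has_derivative
      (\<lambda>h. 0 + (\<Sum>s\<in>UNIV. occupancy (pol \<theta>) P \<gamma> s0 s * (\<Sum>a\<in>UNIV. dpol s a h * Q s a)))) (at \<theta>)"
    by (intro has_derivative_add has_derivative_const has_derivative_sum has_derivative_mult_right E)
  then show ?thesis
    by (simp add: resolvent)
qed

end

theorem mainTheorem5:
  fixes \<sigma> :: "'s::finite \<Rightarrow> 'a::finite \<Rightarrow> real^'s \<Rightarrow> real"
    and r :: "'s \<Rightarrow> 'a \<Rightarrow> real" and \<gamma> :: real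
    and \<Theta> :: "(real^'d) set"
    and pol :: "real^'d \<Rightarrow> 's \<Rightarrow> 'a \<Rightarrow> real"
    and Ph :: "real^'d \<Rightarrow> 's \<Rightarrow> 'a \<Rightarrow> 's \<Rightarrow> real"
  assumes r_range: "\<forall>s a. 0 \<le> r s a \<and> r s a \<le> 1"
    and gamma: "0 \<le> \<gamma>" "\<gamma> < 1"
    and risk: "\<forall>s a. convex_risk_measure (\<sigma> s a)"
    and risk_diff: "\<forall>s a V. \<sigma> s a differentiable (at V)"
    and Theta_open: "open \<Theta>"
    and policy: "\<forall>\<theta>\<in>\<Theta>. stoch_policy (pol \<theta>)"
    and pi_diff: "\<forall>s a. \<forall>\<theta>\<in>\<Theta>. (\<lambda>\<theta>. pol \<theta> s a) differentiable (at \<theta>)"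
    and Ph_worst: "\<forall>\<theta>\<in>\<Theta>. \<forall>s a.
                     is_worst_kernel (\<sigma> s a) (rvalue \<sigma> r \<gamma> (pol \<theta>)) (Ph \<theta> s a)"
    and theta: "\<theta> \<in> \<Theta>"
  shows "\<forall>s.
     (let G = (\<lambda>t. \<gamma> ^ t *\<^sub>R
                 (\<Sum>s'\<in>UNIV. \<Sum>a\<in>UNIV.
                    (state_dist (pol \<theta>) (Ph \<theta>) s t s' * pol \<theta> s' a
                       * rQ \<sigma> r \<gamma> (pol \<theta>) s' a)
                    *\<^sub>R grad (\<lambda>\<eta>. ln (pol \<eta> s' a)) \<theta>))
      in summable G \<and>
         ((\<lambda>\<eta>. rvalue \<sigma> r \<gamma> (pol \<eta>) $ s) has_derivative (\<lambda>h. (\<Sum>t. G t) \<bullet> h)) (at \<theta>))"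
proof -
  have kernel: "Ph \<theta> s a \<in> prob_simplex" for s a
    using Ph_worst theta by (simp add: is_worst_kernel_def)
  interpret chain: discounted_chain "pol \<theta>" "Ph \<theta>" \<gamma>
    using policy theta kernel gamma by unfold_locales auto
  define dpol where "dpol s a h = pol \<theta> s a * (grad (\<lambda>\<eta>. ln (pol \<eta> s a)) \<theta> \<bullet> h)" for s a h
  have "((\<lambda>\<eta>. pol \<eta> s a) has_derivative dpol s a) (at \<theta>)" for s a
  proof -
    have "0 \<le> pol \<eta> s a" if "\<eta> \<in> \<Theta>" for \<eta>
      using policy that stoch_policy_nonneg by blast
    moreover obtain D where "((\<lambda>\<eta>. pol \<eta> s a) has_derivative D) (at \<theta>)"
      using pi_diff theta unfolding differentiable_def by blast
    ultimately show ?thesis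
      unfolding dpol_def by (rule has_derivative_ln_grad[OF Theta_open theta])
  qed
  moreover have "(\<sigma> s a has_derivative (\<lambda>h. - (\<Sum>s'\<in>UNIV. Ph \<theta> s a s' * h $ s')))
      (at (rvalue \<sigma> r \<gamma> (pol \<theta>)))" for s a
    using risk risk_diff Ph_worst theta by (simp add: convex_risk_measure_has_derivative)
  ultimately interpret differentiable_robust_policy \<sigma> r \<gamma> \<Theta> pol \<theta> dpol "Ph \<theta>"
    using risk gamma Theta_open theta policy kernel by unfold_locales auto
  show ?thesis
    unfolding Let_def
    using rvalue_has_derivative
    by (simp add: chain.summable_discounted_state_action_series dpol_def
        flip: chain.discounted_state_action_series_inner)
qed

end
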